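(* Let $G$ be a compactly generated locally compact second countable group and let $\{G_t\}_{t>0}$ be an increasing coarsely admissible family of bounded Borel subsets of $G$. Then for any bounded symmetric generating set $S$ of $G$ there exist $a=a(S)>0$ and $b=b(S)\ge0$ such that $S^n\subset G_{an+b}$ for all $n\ge1$.
   Context: With $m_G$ a left Haar measure on $G$, an increasing family $\{G_t\}$ of bounded Borel subsets of $G$ is coarsely admissible if (i) for every bounded $B\subset G$ there is $c=c_B>0$ such that $B\,G_t\,B\subset G_{t+c}$ for all sufficiently large $t$, and (ii) for every $c>0$ there is $d>0$ such that $m_G(G_{t+c})\le d\,m_G(G_t)$ for all sufficiently large $t$. *)

theory Defs
  imports "HOL-Analysis.Analysis"
begin

text \<open>The group G is a type of class topological_group_add (possibly non-commutative,
  written additively: the group product gh is g + h, the inverse is - g, the identity 0).\<close>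

definition setprod :: "'a::plus set \<Rightarrow> 'a set \<Rightarrow> 'a set" where
  "setprod A B = {a + b | a b. a \<in> A \<and> b \<in> B}"

primrec setpow :: "'a::monoid_add set \<Rightarrow> nat \<Rightarrow> 'a set" where
  "setpow S 0 = {0}"
| "setpow S (Suc n) = setprod (setpow S n) S"

definition generated_subgroup :: "'a::group_add set \<Rightarrow> 'a set" where
  "generated_subgroup A = \<Inter>{H. A \<subseteq> H \<and> 0 \<in> H \<and> (\<forall>x\<in>H. \<forall>y\<in>H. x + y \<in> H) \<and> (\<forall>x\<in>H. - x \<in> H)}"

text \<open>Bounded = relatively compact.\<close>
definition bounded_grp :: "'a::topological_space set \<Rightarrow> bool" where
  "bounded_grp A \<longleftrightarrow> compact (closure A)"

definition compactly_generated :: "'a::topological_group_add itself \<Rightarrow> bool" where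
  "compactly_generated _ \<longleftrightarrow> (\<exists>K::'a set. compact K \<and> generated_subgroup K = UNIV)"

definition left_haar_measure :: "'a::topological_group_add measure \<Rightarrow> bool" where
  "left_haar_measure M \<longleftrightarrow>
     sets M = sets borel \<and>
     (\<forall>g. \<forall>A\<in>sets borel. emeasure M ((\<lambda>x. g + x) ` A) = emeasure M A) \<and>
     (\<forall>K. compact K \<longrightarrow> emeasure M K < \<infinity>) \<and>
     (\<forall>U. open U \<and> U \<noteq> {} \<longrightarrow> emeasure M U > 0) \<and>
     (\<forall>A\<in>sets borel. emeasure M A = (INF U\<in>{U. open U \<and> A \<subseteq> U}. emeasure M U)) \<and>
     (\<forall>U. open U \<longrightarrow> emeasure M U = (SUP K\<in>{K. compact K \<and> K \<subseteq> U}. emeasure M K))"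

definition coarsely_admissible :: "'a::topological_group_add measure \<Rightarrow> (real \<Rightarrow> 'a set) \<Rightarrow> bool" where
  "coarsely_admissible M Gt \<longleftrightarrow>
     (\<forall>B. bounded_grp B \<longrightarrow> (\<exists>c>0. \<exists>T. \<forall>t\<ge>T. setprod (setprod B (Gt t)) B \<subseteq> Gt (t + c))) \<and>
     (\<forall>c>0. \<exists>d>0. \<exists>T. \<forall>t\<ge>T. emeasure M (Gt (t + c)) \<le> ennreal d * emeasure M (Gt t))"

end

theory Submission
  imports Defs
begin

text \<open>Pick g in G(t0) and enlarge S to a bounded set B containing 0 and -g. Condition (i) of
  coarse admissibility gives c > 0 with B G(t) B \<subseteq> G(t + c) for large t. Applied once, it puts
  0 = (-g) g 0 into some G(b); applied n more times, with 0 on the left and S \<subseteq> B on the right,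
  it gives S^n \<subseteq> G(c n + b).\<close>

lemma bounded_grp_insert:
  fixes x :: "'a::t1_space"
  assumes "bounded_grp A"
  shows "bounded_grp (insert x A)"
  using assms by (simp add: bounded_grp_def closure_insert)

lemma setprod_mono:
  assumes "A \<subseteq> A'" and "B \<subseteq> B'"
  shows "setprod A B \<subseteq> setprod A' B'"
  using assms unfolding setprod_def by blast

lemma setprod_zero_left [simp]: "setprod {0} A = (A :: 'a::monoid_add set)"
  unfolding setprod_def by auto

lemma setpow_subset_linear:
  fixes F :: "real \<Rightarrow> 'a::monoid_add set"
  assumes zero: "0 \<in> F t0" and "c \<ge> 0"
    and absorb: "\<And>t. t \<ge> t0 \<Longrightarrow> setprod (F t) S \<subseteq> F (t + c)"
  shows "setpow S n \<subseteq> F (t0 + real n * c)"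
proof (induction n)
  case 0
  show ?case using zero by simp
next
  case (Suc n)
  have "setpow S (Suc n) \<subseteq> setprod (F (t0 + real n * c)) S"
    using Suc.IH by (simp add: setprod_mono)
  also have "\<dots> \<subseteq> F (t0 + real n * c + c)"
    using absorb \<open>c \<ge> 0\<close> by simp
  finally show ?case by (simp add: algebra_simps)
qed

theorem proposition3p8:
  fixes M :: "'a::{topological_group_add, t2_space, second_countable_topology} measure"
    and Gt :: "real \<Rightarrow> 'a set"
    and S :: "'a set"
  assumes "locally_compact_space (euclidean :: 'a topology)"
    and "compactly_generated TYPE('a)"
    and "left_haar_measure M"
    and "\<And>t. t > 0 \<Longrightarrow> bounded_grp (Gt t) \<and> Gt t \<in> sets borel"
    and "\<And>s t. 0 < s \<Longrightarrow> s \<le> t \<Longrightarrow> Gt s \<subseteq> Gt t"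
    and "\<exists>t>0. Gt t \<noteq> {}"
    and "coarsely_admissible M Gt"
    and "bounded_grp S" and "uminus ` S = S" and "generated_subgroup S = UNIV"
  shows "\<exists>a>0. \<exists>b\<ge>0. \<forall>n\<ge>1. setpow S n \<subseteq> Gt (a * real n + b)"
proof -
  obtain t0 g where "t0 > 0" "g \<in> Gt t0" using assms(6) by blast
  define B where "B = insert 0 (insert (- g) S)"
  have "bounded_grp B" unfolding B_def using assms(8) by (intro bounded_grp_insert)
  then obtain c T where "c > 0"
    and absorb_B: "\<And>t. t \<ge> T \<Longrightarrow> setprod (setprod B (Gt t)) B \<subseteq> Gt (t + c)"
    using assms(7) unfolding coarsely_admissible_def by blast
  define t1 where "t1 = max t0 T"
  have "g \<in> Gt t1" using assms(5)[of t0 t1] \<open>t0 > 0\<close> \<open>g \<in> Gt t0\<close> by (auto simp: t1_def)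
  then have "(- g + g) + 0 \<in> setprod (setprod B (Gt t1)) B"
    unfolding setprod_def B_def by blast
  then have zero: "0 \<in> Gt (t1 + c)" using absorb_B[of t1] by (auto simp: t1_def)
  have absorb_S: "setprod (Gt t) S \<subseteq> Gt (t + c)" if "t \<ge> t1 + c" for t
  proof -
    have "setprod (Gt t) S = setprod (setprod {0} (Gt t)) S" by simp
    also have "\<dots> \<subseteq> setprod (setprod B (Gt t)) B" by (intro setprod_mono) (auto simp: B_def)
    also have "\<dots> \<subseteq> Gt (t + c)" using absorb_B \<open>c > 0\<close> that by (simp add: t1_def)
    finally show ?thesis .
  qed
  have "setpow S n \<subseteq> Gt (c * real n + (t1 + c))" for n
    using setpow_subset_linear[where F = Gt and S = S, OF zero _ absorb_S, of n] \<open>c > 0\<close> by (simp add: algebra_simps)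
  moreover have "t1 + c \<ge> 0" using \<open>t0 > 0\<close> \<open>c > 0\<close> by (simp add: t1_def)
  ultimately show ?thesis using \<open>c > 0\<close> by blast
qed

end
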